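(* Let $s\ge 2$, let $J$ be a finite index set, and let $\gamma_j\ge 0$ ($j\in J$) with $\sum_{j\in J}\gamma_j\le 1$. For each $j\in J$ and $i'\in[s]$ let $S^j_{i'}$ be a finite set and $f^j_{i'}$ a nonnegative integer with $f^j_{i'}\le |S^j_{i'}|$, such that for each fixed $j$ the sets $S^j_1,\dots,S^j_s$ are pairwise disjoint. Let $S_{i'}=\bigcup_{j\in J}S^j_{i'}$. Then there exist pairwise disjoint sets $T_{i'}\subseteq S_{i'}$, $i'=1,\dots,s$, such that $|T_{i'}|=\left\lfloor \sum_{j\in J}\gamma_j f^j_{i'}\right\rfloor$ for all $i'\in[s]$. *)

theory Defs
  imports "HOL-Analysis.Analysis"
begin

end

theory Submission
  imports Defs
begin

(* The theorem is a consequence of Hall's marriage theorem with demands: given finite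
   sets N i (i \<in> I) and demands d i, there are pairwise disjoint T i \<subseteq> N i with
   |T i| = d i as soon as every K \<subseteq> I satisfies  \<Sum>_{i\<in>K} d i \<le> |\<Union>_{i\<in>K} N i|.
   Hall's theorem is proved by induction on |I| + \<Sum> d: if some proper nonempty K is
   critical (equality holds), solve K and I - K separately, the latter with the elements
   of \<Union>_{i\<in>K} N i removed; otherwise serve one element x of some N i with positive
   demand and remove x everywhere.
   For the theorem take N i = \<Union>_j S j i and d i = \<lfloor>\<Sum>_j \<gamma> j f j i\<rfloor>.  The Hall
   condition follows from a fractional counting bound: if A j \<subseteq> U and the weights
   \<gamma> j \<ge> 0 sum to at most 1, then \<Sum>_j \<gamma> j |A j| \<le> |U|; apply it to the pairwise
   disjoint unions A j = \<Union>_{i\<in>K} S j i, which have |A j| \<ge> \<Sum>_{i\<in>K} f j i. *)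

definition hall_condition :: "'i set \<Rightarrow> ('i \<Rightarrow> 'a set) \<Rightarrow> ('i \<Rightarrow> nat) \<Rightarrow> bool" where
  "hall_condition I N d \<longleftrightarrow> (\<forall>K\<subseteq>I. sum d K \<le> card (\<Union>(N ` K)))"

definition demand_solution :: "'i set \<Rightarrow> ('i \<Rightarrow> 'a set) \<Rightarrow> ('i \<Rightarrow> nat) \<Rightarrow> ('i \<Rightarrow> 'a set) \<Rightarrow> bool" where
  "demand_solution I N d T \<longleftrightarrow>
     (\<forall>i\<in>I. T i \<subseteq> N i \<and> card (T i) = d i) \<and>
     (\<forall>i\<in>I. \<forall>i'\<in>I. i \<noteq> i' \<longrightarrow> T i \<inter> T i' = {})"

lemma hall_condition_remove_critical:
  assumes fin: "finite I" "\<forall>i\<in>I. finite (N i)" and hall: "hall_condition I N d"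
    and K: "K \<subseteq> I" "sum d K = card (\<Union>(N ` K))"
  shows "hall_condition (I - K) (\<lambda>i. N i - \<Union>(N ` K)) d"
  unfolding hall_condition_def
proof (intro allI impI)
  fix L assume L: "L \<subseteq> I - K"
  define U where "U = \<Union>(N ` K)"
  have fin_L: "finite L" and fin_K: "finite K" using L K(1) fin(1) finite_subset by blast+
  have fin_U: "finite U" unfolding U_def using fin_K K(1) fin(2) by auto
  have fin_rest: "finite (\<Union>(N ` L) - U)" using fin_L fin(2) L by auto
  have "sum d L + sum d K = sum d (L \<union> K)"
    using L fin_L fin_K by (intro sum.union_disjoint[symmetric]) auto
  also have "\<dots> \<le> card (\<Union>(N ` (L \<union> K)))"
    using hall L K(1) unfolding hall_condition_def by blast
  also have "\<Union>(N ` (L \<union> K)) = (\<Union>(N ` L) - U) \<union> U" unfolding U_def by auto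
  also have "card \<dots> = card (\<Union>(N ` L) - U) + card U"
    using fin_rest fin_U by (intro card_Un_disjoint) auto
  finally have "sum d L \<le> card (\<Union>(N ` L) - U)" using K(2) unfolding U_def by linarith
  moreover have "\<Union>((\<lambda>i. N i - U) ` L) = \<Union>(N ` L) - U" by auto
  ultimately show "sum d L \<le> card (\<Union>((\<lambda>i. N i - \<Union>(N ` K)) ` L))" unfolding U_def by simp
qed

lemma demand_solution_glue:
  assumes "K \<subseteq> I" "demand_solution K N d T1"
    and "demand_solution (I - K) (\<lambda>i. N i - \<Union>(N ` K)) d T2"
  shows "demand_solution I N d (\<lambda>i. if i \<in> K then T1 i else T2 i)"
proof -
  have "\<forall>i\<in>K. T1 i \<subseteq> \<Union>(N ` K)" using assms(2) unfolding demand_solution_def by blast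
  then show ?thesis using assms unfolding demand_solution_def by auto blast+
qed

lemma sum_decrement:
  fixes d :: "'i \<Rightarrow> nat"
  assumes "finite I" "i \<in> I" "d i > 0"
  shows "sum (d(i := d i - 1)) I + 1 = sum d I"
proof -
  have "sum (d(i := d i - 1)) (I - {i}) = sum d (I - {i})" by (intro sum.cong) auto
  then have "sum (d(i := d i - 1)) I = (d i - 1) + sum d (I - {i})"
    using sum.remove[OF assms(1,2), of "d(i := d i - 1)"] by simp
  moreover have "sum d I = d i + sum d (I - {i})" using sum.remove[OF assms(1,2)] .
  ultimately show ?thesis using assms(3) by arith
qed

lemma hall_condition_remove_element:
  assumes fin: "finite I" "\<forall>i\<in>I. finite (N i)" and hall: "hall_condition I N d"
    and no_critical: "\<forall>K. K \<subseteq> I \<and> K \<noteq> {} \<and> K \<noteq> I \<longrightarrow> sum d K \<noteq> card (\<Union>(N ` K))"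
    and i: "i \<in> I" "d i > 0" and x: "x \<in> N i"
  shows "hall_condition I (\<lambda>k. N k - {x}) (d(i := d i - 1))"
  unfolding hall_condition_def
proof (intro allI impI)
  fix K assume K: "K \<subseteq> I"
  define d' where "d' = d(i := d i - 1)"
  have fin_UK: "finite (\<Union>(N ` K))" using K fin finite_subset by blast
  have removed: "\<Union>((\<lambda>k. N k - {x}) ` K) = \<Union>(N ` K) - {x}" by auto
  have d'_le: "sum d' K \<le> sum d K" unfolding d'_def by (intro sum_mono) auto
  have "sum d' K \<le> card (\<Union>(N ` K) - {x})"
  proof (cases "K = {} \<or> K = I")
    case True
    show ?thesis
    proof (cases "K = {}")
      case False
      with True have KI: "K = I" by simp
      have x_in: "x \<in> \<Union>(N ` K)" using x i KI by blast
      have "sum d' I + 1 = sum d I"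
        using sum_decrement[of I i d, OF fin(1) i] unfolding d'_def .
      moreover have "card (\<Union>(N ` K) - {x}) + 1 = card (\<Union>(N ` K))"
        using card_Suc_Diff1[OF fin_UK x_in] by simp
      moreover have "sum d I \<le> card (\<Union>(N ` I))" using hall unfolding hall_condition_def by blast
      ultimately show ?thesis using KI by simp
    qed simp
  next
    case False
    then have "sum d K < card (\<Union>(N ` K))"
      using hall no_critical K unfolding hall_condition_def by (meson le_neq_implies_less)
    moreover have "card (\<Union>(N ` K)) \<le> card (\<Union>(N ` K) - {x}) + 1"
      using fin_UK by (auto simp: card_Diff_singleton_if)
    ultimately show ?thesis using d'_le by linarith
  qed
  then show "sum (d(i := d i - 1)) K \<le> card (\<Union>((\<lambda>k. N k - {x}) ` K))"
    unfolding removed d'_def .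
qed

lemma demand_solution_insert:
  assumes "i \<in> I" "d i > 0" "x \<in> N i" "\<forall>k\<in>I. finite (N k)"
    and sol: "demand_solution I (\<lambda>k. N k - {x}) (d(i := d i - 1)) T"
  shows "demand_solution I N d (T(i := insert x (T i)))"
proof -
  have T_i: "T i \<subseteq> N i - {x}" "card (T i) = d i - 1"
    using sol assms(1) unfolding demand_solution_def by auto
  then have "finite (T i)" using assms(1,4) finite_subset by blast
  moreover have "x \<notin> T i" using T_i(1) by blast
  ultimately have "card (insert x (T i)) = d i" using T_i(2) assms(2) by simp
  then show ?thesis using sol assms(3) unfolding demand_solution_def by (auto simp: disjoint_iff)
qed

theorem hall_demand:
  assumes "finite I" "\<forall>i\<in>I. finite (N i)" "hall_condition I N d"
  shows "\<exists>T. demand_solution I N d T"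
  using assms
proof (induction "card I + sum d I" arbitrary: I N d rule: less_induct)
  case less
  note fin = less.prems(1,2) and hall = less.prems(3)
  consider (zero) "\<forall>i\<in>I. d i = 0"
    | (critical) K where "K \<subseteq> I" "K \<noteq> {}" "K \<noteq> I" "sum d K = card (\<Union>(N ` K))"
    | (no_critical) i where "i \<in> I" "d i > 0"
        "\<forall>K. K \<subseteq> I \<and> K \<noteq> {} \<and> K \<noteq> I \<longrightarrow> sum d K \<noteq> card (\<Union>(N ` K))"
    by blast
  then show ?case
  proof cases
    case zero
    then show ?thesis by (intro exI[of _ "\<lambda>_. {}"]) (auto simp: demand_solution_def)
  next
    case critical
    have fin_K: "finite K" using critical(1) fin(1) finite_subset by blast
    have "card K < card I"
      using critical(1,3) fin(1) by (meson psubsetI psubset_card_mono)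
    moreover have "sum d K \<le> sum d I" using fin(1) critical(1) by (simp add: sum_mono2)
    moreover have "hall_condition K N d"
      using hall critical(1) unfolding hall_condition_def by blast
    ultimately obtain T1 where T1: "demand_solution K N d T1"
      using less.hyps[of K d N] fin_K critical(1) fin(2) by fastforce
    have "card (I - K) < card I"
    proof -
      have "0 < card K" using critical(2) fin_K by (simp add: card_gt_0_iff)
      moreover have "card K \<le> card I" using fin(1) critical(1) by (rule card_mono)
      ultimately show ?thesis using card_Diff_subset[OF fin_K critical(1)] by linarith
    qed
    moreover have "sum d (I - K) \<le> sum d I" using fin(1) by (simp add: sum_mono2)
    moreover have "hall_condition (I - K) (\<lambda>i. N i - \<Union>(N ` K)) d"
      using hall_condition_remove_critical[OF fin hall critical(1,4)] .
    ultimately obtain T2 where "demand_solution (I - K) (\<lambda>i. N i - \<Union>(N ` K)) d T2"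
      using less.hyps[of "I - K" d "\<lambda>i. N i - \<Union>(N ` K)"] fin by fastforce
    then show ?thesis using demand_solution_glue[OF critical(1) T1] by blast
  next
    case no_critical
    have "sum d {i} \<le> card (\<Union>(N ` {i}))"
      using hall no_critical(1) unfolding hall_condition_def by blast
    then have "d i \<le> card (N i)" by simp
    then obtain x where x: "x \<in> N i" using no_critical(2) by fastforce
    have "sum (d(i := d i - 1)) I < sum d I"
      using sum_decrement[of I i d, OF fin(1) no_critical(1,2)] by linarith
    then obtain T where "demand_solution I (\<lambda>k. N k - {x}) (d(i := d i - 1)) T"
      using less.hyps fin hall_condition_remove_element[OF fin hall no_critical(3,1,2) x] by fastforce
    then show ?thesis using demand_solution_insert[of i I d x N, OF no_critical(1,2) x fin(2)] by blast
  qed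
qed

(* Subsets A j of a finite set U, weighted by nonnegative weights of total at most 1,
   have weighted total size at most |U|: every element is counted with weight \<le> 1. *)
lemma weighted_card_le:
  fixes \<gamma> :: "'j \<Rightarrow> real"
  assumes "finite U" "\<And>j. j \<in> J \<Longrightarrow> A j \<subseteq> U"
    and "\<And>j. j \<in> J \<Longrightarrow> \<gamma> j \<ge> 0" "sum \<gamma> J \<le> 1"
  shows "(\<Sum>j\<in>J. \<gamma> j * real (card (A j))) \<le> real (card U)"
proof -
  have "(\<Sum>j\<in>J. \<gamma> j * real (card (A j))) = (\<Sum>j\<in>J. \<Sum>x\<in>U. \<gamma> j * indicator (A j) x)"
  proof (intro sum.cong refl)
    fix j assume "j \<in> J"
    then have "real (card (A j)) = (\<Sum>x\<in>U. indicator (A j) x)"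
      using assms(1,2) by (simp add: indicator_def sum.If_cases Int_absorb1)
    then show "\<gamma> j * real (card (A j)) = (\<Sum>x\<in>U. \<gamma> j * indicator (A j) x)"
      by (simp add: sum_distrib_left)
  qed
  also have "\<dots> = (\<Sum>x\<in>U. \<Sum>j\<in>J. \<gamma> j * indicator (A j) x)" by (rule sum.swap)
  also have "\<dots> \<le> (\<Sum>x\<in>U. 1)"
  proof (intro sum_mono)
    fix x
    have "(\<Sum>j\<in>J. \<gamma> j * indicator (A j) x) \<le> sum \<gamma> J"
      using assms(3) by (intro sum_mono) (simp add: indicator_def)
    then show "(\<Sum>j\<in>J. \<gamma> j * indicator (A j) x) \<le> 1" using assms(4) by linarith
  qed
  finally show ?thesis by simp
qed

lemma hall_condition_floor_combination:
  fixes \<gamma> :: "'j \<Rightarrow> real" and S :: "'j \<Rightarrow> 'i \<Rightarrow> 'a set" and f :: "'j \<Rightarrow> 'i \<Rightarrow> nat"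
  assumes "finite I" "finite J"
    and \<gamma>: "\<And>j. j \<in> J \<Longrightarrow> \<gamma> j \<ge> 0" "sum \<gamma> J \<le> 1"
    and fin_S: "\<And>j i. j \<in> J \<Longrightarrow> i \<in> I \<Longrightarrow> finite (S j i)"
    and f_le: "\<And>j i. j \<in> J \<Longrightarrow> i \<in> I \<Longrightarrow> f j i \<le> card (S j i)"
    and disj: "\<And>j i i'. j \<in> J \<Longrightarrow> i \<in> I \<Longrightarrow> i' \<in> I \<Longrightarrow> i \<noteq> i' \<Longrightarrow> S j i \<inter> S j i' = {}"
  shows "hall_condition I (\<lambda>i. \<Union>j\<in>J. S j i) (\<lambda>i. nat \<lfloor>\<Sum>j\<in>J. \<gamma> j * real (f j i)\<rfloor>)"
  unfolding hall_condition_def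
proof (intro allI impI)
  fix K assume K: "K \<subseteq> I"
  define U where "U = (\<Union>i\<in>K. \<Union>j\<in>J. S j i)"
  define A where "A = (\<lambda>j. \<Union>i\<in>K. S j i)"
  have fin_K: "finite K" using K assms(1) finite_subset by blast
  have fin_U: "finite U" unfolding U_def using fin_K assms(2) fin_S K by auto
  have card_A: "(\<Sum>i\<in>K. real (f j i)) \<le> real (card (A j))" if j: "j \<in> J" for j
  proof -
    have "(\<Sum>i\<in>K. f j i) \<le> (\<Sum>i\<in>K. card (S j i))" using f_le j K by (intro sum_mono) auto
    also have "\<dots> = card (A j)"
      unfolding A_def
    proof (rule card_UN_disjoint[symmetric])
      show "finite K" by (rule fin_K)
      show "\<forall>i\<in>K. finite (S j i)" using fin_S j K by blast
      show "\<forall>i\<in>K. \<forall>i'\<in>K. i \<noteq> i' \<longrightarrow> S j i \<inter> S j i' = {}" using disj j K by blast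
    qed
    finally show ?thesis by (simp only: of_nat_sum[symmetric] of_nat_le_iff)
  qed
  have "(\<Sum>i\<in>K. real (nat \<lfloor>\<Sum>j\<in>J. \<gamma> j * real (f j i)\<rfloor>))
          \<le> (\<Sum>i\<in>K. \<Sum>j\<in>J. \<gamma> j * real (f j i))"
  proof (intro sum_mono)
    fix i
    have "0 \<le> (\<Sum>j\<in>J. \<gamma> j * real (f j i))" using \<gamma>(1) by (intro sum_nonneg) auto
    then show "real (nat \<lfloor>\<Sum>j\<in>J. \<gamma> j * real (f j i)\<rfloor>) \<le> (\<Sum>j\<in>J. \<gamma> j * real (f j i))"
      by simp
  qed
  also have "\<dots> = (\<Sum>j\<in>J. \<gamma> j * (\<Sum>i\<in>K. real (f j i)))"
    by (subst sum.swap) (simp add: sum_distrib_left)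
  also have "\<dots> \<le> (\<Sum>j\<in>J. \<gamma> j * real (card (A j)))"
    using \<gamma>(1) card_A by (intro sum_mono mult_left_mono) auto
  also have "\<dots> \<le> real (card U)"
  proof (rule weighted_card_le[OF fin_U _ \<gamma>])
    show "A j \<subseteq> U" if "j \<in> J" for j unfolding A_def U_def using that by blast
  qed
  finally show "(\<Sum>i\<in>K. nat \<lfloor>\<Sum>j\<in>J. \<gamma> j * real (f j i)\<rfloor>) \<le> card (\<Union>((\<lambda>i. \<Union>j\<in>J. S j i) ` K))"
    unfolding U_def by (simp only: of_nat_sum[symmetric] of_nat_le_iff)
qed

theorem mainTheorem2:
  fixes s :: nat and J :: "'j set" and \<gamma> :: "'j \<Rightarrow> real"
    and S :: "'j \<Rightarrow> nat \<Rightarrow> 'a set" and f :: "'j \<Rightarrow> nat \<Rightarrow> nat"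
  assumes "s \<ge> 2"
    and "finite J"
    and "\<And>j. j \<in> J \<Longrightarrow> \<gamma> j \<ge> 0"
    and "(\<Sum>j\<in>J. \<gamma> j) \<le> 1"
    and "\<And>j i. j \<in> J \<Longrightarrow> i \<in> {1..s} \<Longrightarrow> finite (S j i)"
    and "\<And>j i. j \<in> J \<Longrightarrow> i \<in> {1..s} \<Longrightarrow> f j i \<le> card (S j i)"
    and "\<And>j i i'. j \<in> J \<Longrightarrow> i \<in> {1..s} \<Longrightarrow> i' \<in> {1..s} \<Longrightarrow> i \<noteq> i'
           \<Longrightarrow> S j i \<inter> S j i' = {}"
  shows "\<exists>T :: nat \<Rightarrow> 'a set.
           (\<forall>i\<in>{1..s}. T i \<subseteq> (\<Union>j\<in>J. S j i)) \<and>
           (\<forall>i\<in>{1..s}. \<forall>i'\<in>{1..s}. i \<noteq> i' \<longrightarrow> T i \<inter> T i' = {}) \<and>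
           (\<forall>i\<in>{1..s}. int (card (T i)) = \<lfloor>\<Sum>j\<in>J. \<gamma> j * real (f j i)\<rfloor>)"
proof -
  define d where "d = (\<lambda>i. nat \<lfloor>\<Sum>j\<in>J. \<gamma> j * real (f j i)\<rfloor>)"
  have "hall_condition {1..s} (\<lambda>i. \<Union>j\<in>J. S j i) d"
    unfolding d_def by (rule hall_condition_floor_combination[OF _ assms(2-7)]) simp
  moreover have "finite (\<Union>j\<in>J. S j i)" if "i \<in> {1..s}" for i
    using assms(2) by (rule finite_UN_I) (rule assms(5)[OF _ that])
  ultimately obtain T where T: "demand_solution {1..s} (\<lambda>i. \<Union>j\<in>J. S j i) d T"
    using hall_demand[of "{1..s}" "\<lambda>i. \<Union>j\<in>J. S j i" d] by auto
  have "0 \<le> (\<Sum>j\<in>J. \<gamma> j * real (f j i))" for i using assms(3) by (intro sum_nonneg) auto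
  then have "int (d i) = \<lfloor>\<Sum>j\<in>J. \<gamma> j * real (f j i)\<rfloor>" for i unfolding d_def by simp
  then show ?thesis using T unfolding demand_solution_def by (intro exI[of _ T]) auto
qed

end
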